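(* Let $n\geq1$ and, on the second jet space $J^2(n,1)$ with coordinates $(x^i,u,u_i,u_{ij})$, let $U=(u_{ij})$ be the (symmetric) matrix of second-order coordinates and $U_k$ its upper-left $k\times k$ submatrix. Then the second-order PDEs $\{\det U_k=0\}$, $k=1,\dots,n$, are all locally contactomorphic to each other, i.e. for any $k,l$ there is a local contact transformation of $J^1(n,1)$ whose prolongation to $J^2(n,1)$ maps $\{\det U_k=0\}$ onto $\{\det U_l=0\}$. (In particular, for $n=2$, $u_{11}u_{22}-u_{12}^2=0$ and $u_{11}=0$ are contactomorphic.)
   Context: $J^1(n,1)$ has coordinates $(x^i,u,u_i)$ and contact distribution $\ker(du-u_idx^i)$; $J^2(n,1)$ is identified (locally) with the bundle of Lagrangian planes of this contact distribution, the point $(x^i,u,u_i,u_{ij})$ corresponding to the plane $\langle \partial_{x^i}+u_i\partial_u+u_{ij}\partial_{u_j}\rangle$. A contact transformation $\phi$ prolongs to $J^2(n,1)$ by $L\mapsto d\phi(L)$. *)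

theory Defs
  imports "HOL-Analysis.Analysis"
begin

type_synonym 'n jet1 = "(real^'n) \<times> real \<times> (real^'n)"
type_synonym 'n jet2 = "'n jet1 \<times> ((real, 'n) vec, 'n) vec"

fun higher_differentiable_on ::
  "'a::real_normed_vector set \<Rightarrow> ('a \<Rightarrow> 'b::real_normed_vector) \<Rightarrow> nat \<Rightarrow> bool" where
  "higher_differentiable_on S f 0 = continuous_on S f"
| "higher_differentiable_on S f (Suc k) =
     (f differentiable_on S \<and>
      (\<forall>v. higher_differentiable_on S (\<lambda>x. frechet_derivative f (at x) v) k))"

definition smooth_on :: "'a::real_normed_vector set \<Rightarrow> ('a \<Rightarrow> 'b::real_normed_vector) \<Rightarrow> bool" where
  "smooth_on S f \<longleftrightarrow> (\<forall>k. higher_differentiable_on S f k)"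

definition contact_plane :: "'n::finite jet1 \<Rightarrow> 'n jet1 set" where
  "contact_plane w = (case w of (x, u, p) \<Rightarrow> {(dx, du, dp). du = p \<bullet> dx})"

definition local_contact_transformation :: "('n::finite jet1 \<Rightarrow> 'n jet1) \<Rightarrow> 'n jet1 set \<Rightarrow> bool" where
  "local_contact_transformation \<phi> W \<longleftrightarrow>
     open W \<and> open (\<phi> ` W) \<and> smooth_on W \<phi> \<and>
     (\<exists>\<psi>. smooth_on (\<phi> ` W) \<psi> \<and> (\<forall>w\<in>W. \<psi> (\<phi> w) = w) \<and> (\<forall>z\<in>\<phi> ` W. \<phi> (\<psi> z) = z)) \<and>
     (\<forall>w\<in>W. \<forall>v\<in>contact_plane w. frechet_derivative \<phi> (at w) v \<in> contact_plane (\<phi> w))"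

text \<open>The Lagrangian plane spanned by the vectors d/dx_i + p_i d/du + sum_j U_ij d/dp_j.\<close>
definition lagr_plane :: "real^'n \<Rightarrow> real^'n^'n \<Rightarrow> 'n::finite jet1 set" where
  "lagr_plane p U = {(dx, p \<bullet> dx, U *v dx) | dx. True}"

definition J2 :: "'n::finite jet2 set" where
  "J2 = {(w, U). transpose U = U}"

definition prolongs :: "('n::finite jet1 \<Rightarrow> 'n jet1) \<Rightarrow> 'n jet2 \<Rightarrow> 'n jet2 \<Rightarrow> bool" where
  "prolongs \<phi> a b \<longleftrightarrow>
     (case a of ((x, u, p), U) \<Rightarrow> case b of ((x', u', p'), U') \<Rightarrow>
        (x', u', p') = \<phi> (x, u, p) \<and> transpose U' = U' \<and>
        frechet_derivative \<phi> (at (x, u, p)) ` lagr_plane p U = lagr_plane p' U')"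

text \<open>The first k indices (w.r.t. the order of the index type), and det U_k (Leibniz formula).\<close>
definition lead :: "nat \<Rightarrow> 'n::{finite,wellorder} set" where
  "lead k = {i. card {j. j < i} < k}"

definition det_lead :: "nat \<Rightarrow> ((real, 'n::{finite,wellorder}) vec, 'n) vec \<Rightarrow> real" where
  "det_lead k U = (\<Sum>\<pi> | \<pi> permutes (lead k :: 'n set).
       of_int (sign \<pi>) * (\<Prod>i\<in>lead k. U $ i $ \<pi> i))"

end

theory Submission
  imports Defs
begin

text \<open>Let I be the symmetric difference of K = lead k and L = lead l. The partial Legendre
  transformation exchanging x_i and p_i for i in I is a global contactomorphism of J^1(n,1).
  Its differential maps a Lagrangian plane, seen as the graph {(dx, U dx)} of a symmetric matrix U,
  by the swap (dx_i, dp_i) -> (dp_i, -dx_i) for i in I. Where the image is again a graph, i.e. the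
  matrix with rows U_i (i in I) and e_i (i not in I) is invertible, this gives the prolongation, and
  the new matrix is symmetric because the swap is symplectic. Finally det U_K = 0 iff the graph of U
  contains a nonzero (dx, dp) with dx supported in K and dp vanishing on K, and the swap maps this
  coordinate Lagrangian subspace for K onto the one for the symmetric difference of K and I, which
  is L.\<close>

lemma higher_differentiable_on_UNIV_SucI:
  fixes f :: "'a::real_normed_vector \<Rightarrow> 'b::real_normed_vector"
  assumes "\<And>x. (f has_derivative f' x) (at x)"
    and "\<And>v. higher_differentiable_on UNIV (\<lambda>x. f' x v) k"
  shows "higher_differentiable_on UNIV f (Suc k)"
proof -
  have "frechet_derivative f (at x) = f' x" for x
    using assms(1) frechet_derivative_at by metis
  moreover have "f differentiable_on UNIV"
    using assms(1) differentiable_def differentiable_at_imp_differentiable_on by blast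
  ultimately show ?thesis using assms(2) by simp
qed

lemma higher_differentiable_on_const:
  "higher_differentiable_on (UNIV::'a::real_normed_vector set) (\<lambda>x. c::'b::real_normed_vector) k"
proof (induction k arbitrary: c)
  case (Suc k)
  show ?case by (rule higher_differentiable_on_UNIV_SucI[where f'="\<lambda>x v. 0"]) (auto intro: Suc.IH)
qed simp

lemma higher_differentiable_on_affine:
  fixes g :: "'a::real_normed_vector \<Rightarrow> 'b::real_normed_vector"
  assumes "bounded_linear g"
  shows "higher_differentiable_on UNIV (\<lambda>x. c + g x) k"
proof (cases k)
  case 0
  then show ?thesis using assms by (simp add: linear_continuous_on continuous_on_add)
next
  case (Suc k)
  have "((\<lambda>x. c + g x) has_derivative (\<lambda>h. 0 + g h)) (at x)" for x
    by (intro has_derivative_add has_derivative_const bounded_linear_imp_has_derivative assms)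
  then show ?thesis
    unfolding Suc by (rule higher_differentiable_on_UNIV_SucI) (rule higher_differentiable_on_const)
qed

lemma has_derivative_quadratic:
  assumes "bounded_linear g" "bounded_bilinear B"
  shows "((\<lambda>w. g w + B w w) has_derivative (\<lambda>v. g v + (B w v + B v w))) (at w)"
  by (intro has_derivative_add bounded_linear.has_derivative[OF assms(1)]
      bounded_bilinear.FDERIV[OF assms(2)] has_derivative_ident)

lemma smooth_on_quadratic:
  fixes g :: "'a::real_normed_vector \<Rightarrow> 'b::real_normed_vector"
  assumes g: "bounded_linear g" and B: "bounded_bilinear B"
  shows "smooth_on UNIV (\<lambda>w. g w + B w w)"
  unfolding smooth_on_def
proof
  fix k
  show "higher_differentiable_on UNIV (\<lambda>w. g w + B w w) k"
  proof (cases k)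
    case 0
    have "isCont (\<lambda>w. g w + B w w) x" for x
      by (rule has_derivative_continuous[OF has_derivative_quadratic[OF g B]])
    then show ?thesis using 0 by (simp add: continuous_at_imp_continuous_on)
  next
    case (Suc k)
    have "bounded_linear (\<lambda>w. B w v + B v w)" for v
      by (intro bounded_linear_add bounded_bilinear.bounded_linear_left[OF B]
          bounded_bilinear.bounded_linear_right[OF B])
    then show ?thesis unfolding Suc
      by (intro higher_differentiable_on_UNIV_SucI[OF has_derivative_quadratic[OF g B]]
          higher_differentiable_on_affine)
  qed
qed

definition vec_merge :: "'n::finite set \<Rightarrow> 'a^'n \<Rightarrow> 'a^'n \<Rightarrow> 'a^'n" where
  "vec_merge I a b = (\<chi> i. if i \<in> I then a $ i else b $ i)"

lemma vec_merge_nth [simp]: "vec_merge I a b $ i = (if i \<in> I then a $ i else b $ i)"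
  by (simp add: vec_merge_def)

lemma matrix_vector_mult_vec_merge:
  "vec_merge I A B *v v = vec_merge I (A *v v) (B *v v)"
  by (simp add: vec_eq_iff matrix_vector_mult_def)

definition legendre :: "'n::finite set \<Rightarrow> 'n jet1 \<Rightarrow> 'n jet1" where
  "legendre I = (\<lambda>(x, u, p). (vec_merge I p x, u - (\<Sum>i\<in>I. x $ i * p $ i), vec_merge I (- x) p))"

definition legendre_inv :: "'n::finite set \<Rightarrow> 'n jet1 \<Rightarrow> 'n jet1" where
  "legendre_inv I = (\<lambda>(x, u, p). (vec_merge I (- p) x, u - (\<Sum>i\<in>I. x $ i * p $ i), vec_merge I x p))"

lemma legendre_inv_legendre: "legendre_inv I (legendre I w) = w"
proof -
  obtain x u p where w: "w = (x, u, p)" by (cases w) auto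
  have "(\<Sum>i\<in>I. p $ i * - x $ i) = - (\<Sum>i\<in>I. x $ i * p $ i)"
    by (simp add: sum_negf mult.commute)
  then show ?thesis by (simp add: w legendre_def legendre_inv_def vec_eq_iff cong: sum.cong)
qed

lemma legendre_legendre_inv: "legendre I (legendre_inv I w) = w"
proof -
  obtain x u p where w: "w = (x, u, p)" by (cases w) auto
  have "(\<Sum>i\<in>I. - p $ i * x $ i) = - (\<Sum>i\<in>I. x $ i * p $ i)"
    by (simp add: sum_negf mult.commute)
  then show ?thesis by (simp add: w legendre_def legendre_inv_def vec_eq_iff cong: sum.cong)
qed

lemma legendre_quadratic:
  fixes I :: "'n::finite set"
  defines "g \<equiv> \<lambda>w :: 'n jet1.
      (vec_merge I (snd (snd w)) (fst w), fst (snd w), vec_merge I (- fst w) (snd (snd w)))"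
    and "B \<equiv> \<lambda>w w' :: 'n jet1. (0 :: real^'n, - (\<Sum>i\<in>I. fst w $ i * snd (snd w') $ i), 0 :: real^'n)"
  shows "bounded_linear g" "bounded_bilinear B" "legendre I = (\<lambda>w. g w + B w w)"
proof -
  show "bounded_linear g"
    unfolding g_def linear_conv_bounded_linear[symmetric]
    by (rule linearI) (auto simp: vec_eq_iff algebra_simps)
  show "bounded_bilinear B"
    unfolding B_def bilinear_conv_bounded_bilinear[symmetric] bilinear_def
    by (auto intro!: linearI simp: algebra_simps sum.distrib sum_distrib_left)
  show "legendre I = (\<lambda>w. g w + B w w)"
    by (auto simp: legendre_def g_def B_def)
qed

lemma legendre_inv_quadratic:
  fixes I :: "'n::finite set"
  defines "g \<equiv> \<lambda>w :: 'n jet1.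
      (vec_merge I (- snd (snd w)) (fst w), fst (snd w), vec_merge I (fst w) (snd (snd w)))"
    and "B \<equiv> \<lambda>w w' :: 'n jet1. (0 :: real^'n, - (\<Sum>i\<in>I. fst w $ i * snd (snd w') $ i), 0 :: real^'n)"
  shows "bounded_linear g" "bounded_bilinear B" "legendre_inv I = (\<lambda>w. g w + B w w)"
proof -
  show "bounded_linear g"
    unfolding g_def linear_conv_bounded_linear[symmetric]
    by (rule linearI) (auto simp: vec_eq_iff algebra_simps)
  show "bounded_bilinear B"
    unfolding B_def bilinear_conv_bounded_bilinear[symmetric] bilinear_def
    by (auto intro!: linearI simp: algebra_simps sum.distrib sum_distrib_left)
  show "legendre_inv I = (\<lambda>w. g w + B w w)"
    by (auto simp: legendre_inv_def g_def B_def)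
qed

lemma smooth_on_legendre: "smooth_on UNIV (legendre I)"
  by (subst legendre_quadratic(3)) (intro smooth_on_quadratic legendre_quadratic(1,2))

lemma smooth_on_legendre_inv: "smooth_on UNIV (legendre_inv I)"
  by (subst legendre_inv_quadratic(3)) (intro smooth_on_quadratic legendre_inv_quadratic(1,2))

lemma frechet_derivative_legendre:
  "frechet_derivative (legendre I) (at (x, u, p)) (dx, du, dp) =
     (vec_merge I dp dx, du - (\<Sum>i\<in>I. x $ i * dp $ i + dx $ i * p $ i), vec_merge I (- dx) dp)"
proof -
  let ?D = "\<lambda>(dx, du, dp). (vec_merge I dp dx, du - (\<Sum>i\<in>I. x $ i * dp $ i + dx $ i * p $ i),
              vec_merge I (- dx) dp)"
  have "(legendre I has_derivative ?D) (at (x, u, p))"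
    using has_derivative_quadratic[OF legendre_quadratic(1,2)[of I], where w="(x, u, p)"]
    unfolding legendre_quadratic(3)[symmetric]
    by (rule has_derivative_eq_rhs) (auto simp: fun_eq_iff sum.distrib)
  then show ?thesis by (simp add: frechet_derivative_at[symmetric])
qed

lemma legendre_derivative_contact:
  fixes I :: "'n::finite set"
  assumes "du = p \<bullet> dx"
  shows "du - (\<Sum>i\<in>I. x $ i * dp $ i + dx $ i * p $ i) = vec_merge I (- x) p \<bullet> vec_merge I dp dx"
proof -
  have split: "sum f UNIV = sum f I + sum f (- I)" for f :: "'n \<Rightarrow> real"
    by (metis Compl_eq_Diff_UNIV add.commute finite_class.finite_UNIV subset_UNIV sum.subset_diff)
  have "vec_merge I (- x) p \<bullet> vec_merge I dp dx =
      (\<Sum>i\<in>I. - x $ i * dp $ i) + (\<Sum>i\<in>- I. p $ i * dx $ i)"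
    unfolding inner_vec_def split[of "\<lambda>i. vec_merge I (- x) p $ i \<bullet> vec_merge I dp dx $ i"] by simp
  moreover have "du = (\<Sum>i\<in>I. p $ i * dx $ i) + (\<Sum>i\<in>- I. p $ i * dx $ i)"
    using assms unfolding inner_vec_def split[of "\<lambda>i. p $ i \<bullet> dx $ i"] by simp
  ultimately show ?thesis by (simp add: sum.distrib sum_negf algebra_simps)
qed

lemma local_contact_transformation_legendre: "local_contact_transformation (legendre I) UNIV"
proof -
  have "legendre I ` UNIV = UNIV"
    by (metis legendre_legendre_inv surjI)
  moreover have "frechet_derivative (legendre I) (at w) v \<in> contact_plane (legendre I w)"
    if "v \<in> contact_plane w" for w v
  proof -
    obtain x u p dx du dp where "w = (x, u, p)" "v = (dx, du, dp)"
      by (metis prod.exhaust)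
    with that show ?thesis
      by (simp add: contact_plane_def frechet_derivative_legendre legendre_derivative_contact)
        (simp add: legendre_def)
  qed
  ultimately show ?thesis
    unfolding local_contact_transformation_def
    using smooth_on_legendre smooth_on_legendre_inv legendre_inv_legendre legendre_legendre_inv
    by (metis UNIV_I open_UNIV)
qed

definition legendre_swap :: "'n::finite set \<Rightarrow> (real^'n) \<times> (real^'n) \<Rightarrow> (real^'n) \<times> (real^'n)" where
  "legendre_swap I = (\<lambda>(a, b). (vec_merge I b a, vec_merge I (- a) b))"

definition matrix_graph :: "real^'n^'n \<Rightarrow> ((real^'n) \<times> (real^'n)) set" where
  "matrix_graph U = range (\<lambda>v. (v, U *v v))"

lemma lagr_plane_eq_image_graph: "lagr_plane p U = (\<lambda>(X, Y). (X, p \<bullet> X, Y)) ` matrix_graph U"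
  by (auto simp: lagr_plane_def matrix_graph_def)

lemma legendre_derivative_image_lagr_plane:
  "frechet_derivative (legendre I) (at (x, u, p)) ` lagr_plane p U =
     (\<lambda>(X, Y). (X, vec_merge I (- x) p \<bullet> X, Y)) ` legendre_swap I ` matrix_graph U"
  unfolding lagr_plane_eq_image_graph matrix_graph_def image_image
  by (intro image_cong)
    (simp_all add: frechet_derivative_legendre legendre_derivative_contact legendre_swap_def)

lemma prolongs_legendre_iff:
  "prolongs (legendre I) ((x, u, p), U) ((x', u', p'), U') \<longleftrightarrow>
     (x', u', p') = legendre I (x, u, p) \<and> transpose U' = U' \<and>
     legendre_swap I ` matrix_graph U = matrix_graph U'"
proof -
  have inj: "inj (\<lambda>(X, Y). (X, c \<bullet> X, Y))" for c :: "real^'a"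
    by (auto simp: inj_def)
  have "frechet_derivative (legendre I) (at (x, u, p)) ` lagr_plane p U = lagr_plane p' U' \<longleftrightarrow>
      legendre_swap I ` matrix_graph U = matrix_graph U'"
    if "(x', u', p') = legendre I (x, u, p)"
  proof -
    from that have "p' = vec_merge I (- x) p" by (simp add: legendre_def)
    then show ?thesis
      unfolding legendre_derivative_image_lagr_plane
      unfolding lagr_plane_eq_image_graph
      by (simp add: inj_image_eq_iff[OF inj])
  qed
  then show ?thesis unfolding prolongs_def by auto
qed

lemma symmetric_matrix_iff:
  fixes U :: "real^'n^'n"
  shows "transpose U = U \<longleftrightarrow> (\<forall>v w. v \<bullet> (U *v w) = (U *v v) \<bullet> w)"
proof -
  have "(U *v v) \<bullet> w = v \<bullet> (transpose U *v w)" for v w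
    by (metis dot_lmul_matrix vector_transpose_matrix)
  then have "(\<forall>v w. v \<bullet> (U *v w) = (U *v v) \<bullet> w) \<longleftrightarrow> (\<forall>w. U *v w = transpose U *v w)"
    by (metis inner_commute vector_eq_rdot)
  then show ?thesis
    by (metis matrix_eq)
qed

lemma legendre_swap_symplectic:
  assumes "legendre_swap I (a, b) = (X, Y)" "legendre_swap I (a', b') = (X', Y')"
  shows "X \<bullet> Y' - Y \<bullet> X' = a \<bullet> b' - b \<bullet> a'"
  using assms unfolding inner_vec_def sum_subtractf[symmetric]
  by (intro sum.cong) (auto simp: legendre_swap_def)

lemma symmetric_if_legendre_swap_graph:
  assumes "transpose U = U" and graph: "legendre_swap I ` matrix_graph U = matrix_graph U'"
  shows "transpose U' = U'"
  unfolding symmetric_matrix_iff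
proof (intro allI)
  fix v w
  have "(v, U' *v v) \<in> legendre_swap I ` matrix_graph U"
    and "(w, U' *v w) \<in> legendre_swap I ` matrix_graph U"
    unfolding graph by (simp_all add: matrix_graph_def)
  then obtain a b where "legendre_swap I (a, U *v a) = (v, U' *v v)"
    and "legendre_swap I (b, U *v b) = (w, U' *v w)"
    unfolding matrix_graph_def by auto
  then have "v \<bullet> (U' *v w) - (U' *v v) \<bullet> w = a \<bullet> (U *v b) - (U *v a) \<bullet> b"
    by (rule legendre_swap_symplectic)
  then show "v \<bullet> (U' *v w) = (U' *v v) \<bullet> w"
    using assms(1) unfolding symmetric_matrix_iff by simp
qed

lemma matrix_vector_mult_uminus_left [simp]:
  fixes A :: "'a::ring_1^'n^'m"
  shows "(- A) *v v = - (A *v v)"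
  by (simp add: vec_eq_iff matrix_vector_mult_def sum_negf[symmetric])

lemma legendre_swap_graph_point:
  "legendre_swap I (v, U *v v) = (vec_merge I U (mat 1) *v v, vec_merge I (- mat 1) U *v v)"
  by (simp add: legendre_swap_def matrix_vector_mult_vec_merge)

lemma legendre_swap_matrix_graph:
  assumes inv: "vec_merge I U (mat 1) ** B = mat 1" "B ** vec_merge I U (mat 1) = mat 1"
  shows "legendre_swap I ` matrix_graph U = matrix_graph (vec_merge I (- mat 1) U ** B)"
proof -
  let ?F = "vec_merge I U (mat 1)" and ?G = "vec_merge I (- mat 1) U"
  have "legendre_swap I (v, U *v v) = (?F *v v, (?G ** B) *v (?F *v v))" for v
    by (simp add: legendre_swap_graph_point matrix_vector_mul_assoc inv(2) flip: matrix_mul_assoc)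
  moreover have "(X, (?G ** B) *v X) = legendre_swap I (B *v X, U *v (B *v X))" for X
    unfolding legendre_swap_graph_point by (simp add: matrix_vector_mul_assoc inv(1))
  ultimately show ?thesis
    unfolding matrix_graph_def by (auto simp: image_iff) metis
qed

lemma prolongs_legendre_exists:
  assumes "transpose U = U" "det (vec_merge I U (mat 1)) \<noteq> 0"
  shows "\<exists>b. prolongs (legendre I) ((x, u, p), U) b"
proof -
  obtain B where "vec_merge I U (mat 1) ** B = mat 1" "B ** vec_merge I U (mat 1) = mat 1"
    using assms(2) invertible_det_nz invertible_def by blast
  then have graph: "legendre_swap I ` matrix_graph U = matrix_graph (vec_merge I (- mat 1) U ** B)"
    by (rule legendre_swap_matrix_graph)
  obtain x' u' p' where "legendre I (x, u, p) = (x', u', p')"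
    by (metis prod.exhaust)
  then have "prolongs (legendre I) ((x, u, p), U) ((x', u', p'), vec_merge I (- mat 1) U ** B)"
    using symmetric_if_legendre_swap_graph[OF assms(1) graph] graph
    by (simp add: prolongs_legendre_iff)
  then show ?thesis by blast
qed

definition coord_lagrangian :: "'n::finite set \<Rightarrow> ((real^'n) \<times> (real^'n)) set" where
  "coord_lagrangian K = {(a, b). (\<forall>i. i \<notin> K \<longrightarrow> a $ i = 0) \<and> (\<forall>i\<in>K. b $ i = 0)}"

lemma legendre_swap_in_coord_lagrangian_iff:
  "legendre_swap I z \<in> coord_lagrangian (sym_diff K I) \<longleftrightarrow> z \<in> coord_lagrangian K"
  by (cases z) (auto simp: legendre_swap_def coord_lagrangian_def)

lemma legendre_swap_eq_0_iff: "legendre_swap I z = 0 \<longleftrightarrow> z = 0"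
  by (cases z) (auto simp: legendre_swap_def vec_eq_iff zero_prod_def)

lemma legendre_swap_nontrivial_intersection:
  assumes "legendre_swap I ` G = G'"
  shows "(\<exists>z\<in>G \<inter> coord_lagrangian K. z \<noteq> 0) \<longleftrightarrow>
    (\<exists>z\<in>G' \<inter> coord_lagrangian (sym_diff K I). z \<noteq> 0)"
proof -
  have "(\<exists>z\<in>G \<inter> coord_lagrangian K. z \<noteq> 0) \<longleftrightarrow>
      (\<exists>z\<in>G. legendre_swap I z \<in> coord_lagrangian (sym_diff K I) \<and> legendre_swap I z \<noteq> 0)"
    by (simp only: Bex_def Int_iff legendre_swap_in_coord_lagrangian_iff legendre_swap_eq_0_iff
        conj_assoc)
  then show ?thesis
    unfolding assms[symmetric] by blast
qed

definition extend_by_identity :: "'n::finite set \<Rightarrow> real^'n^'n \<Rightarrow> real^'n^'n" where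
  "extend_by_identity K U = (\<chi> i j. if i \<in> K \<and> j \<in> K then U $ i $ j else mat 1 $ i $ j)"

lemma extend_by_identity_mult:
  "extend_by_identity K U *v v = vec_merge K (U *v vec_merge K v 0) v"
proof -
  have "(extend_by_identity K U *v v) $ i = vec_merge K (U *v vec_merge K v 0) v $ i" for i
  proof (cases "i \<in> K")
    case True
    then show ?thesis
      by (auto simp: matrix_vector_mult_def extend_by_identity_def mat_def intro!: sum.cong)
  next
    case False
    then show ?thesis
      by (simp add: matrix_vector_mult_def extend_by_identity_def mat_def mult_if_delta)
  qed
  then show ?thesis by (simp add: vec_eq_iff)
qed

lemma extend_by_identity_kernel:
  "extend_by_identity K U *v v = 0 \<longleftrightarrow> (v, U *v v) \<in> coord_lagrangian K"
proof
  assume ker: "extend_by_identity K U *v v = 0"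
  then have "vec_merge K v 0 = v"
    by (auto simp: vec_eq_iff extend_by_identity_mult) metis
  with ker have "vec_merge K (U *v v) v = 0"
    by (simp add: extend_by_identity_mult)
  then show "(v, U *v v) \<in> coord_lagrangian K"
    by (auto simp: vec_eq_iff coord_lagrangian_def) metis+
next
  assume z: "(v, U *v v) \<in> coord_lagrangian K"
  then have "vec_merge K v 0 = v"
    by (auto simp: vec_eq_iff coord_lagrangian_def)
  with z show "extend_by_identity K U *v v = 0"
    by (simp add: extend_by_identity_mult) (auto simp: vec_eq_iff coord_lagrangian_def)
qed

lemma det_extend_by_identity:
  fixes K :: "'n::finite set"
  shows "det (extend_by_identity K U) = (\<Sum>\<pi> | \<pi> permutes K. of_int (sign \<pi>) * (\<Prod>i\<in>K. U $ i $ \<pi> i))"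
proof -
  let ?E = "extend_by_identity K U"
  have vanish: "(\<Prod>i\<in>UNIV. ?E $ i $ \<pi> i) = 0" if "\<pi> permutes UNIV" "\<not> \<pi> permutes K" for \<pi>
  proof -
    from that obtain i where "i \<notin> K" "\<pi> i \<noteq> i"
      unfolding permutes_def by blast
    then have "?E $ i $ \<pi> i = 0" by (simp add: extend_by_identity_def mat_def)
    then show ?thesis by (meson UNIV_I finite prod_zero_iff)
  qed
  have restrict: "(\<Prod>i\<in>UNIV. ?E $ i $ \<pi> i) = (\<Prod>i\<in>K. U $ i $ \<pi> i)" if "\<pi> permutes K" for \<pi>
  proof -
    have "(\<Prod>i\<in>UNIV. ?E $ i $ \<pi> i) = (\<Prod>i\<in>K \<union> -K. ?E $ i $ \<pi> i)"
      by simp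
    also have "\<dots> = (\<Prod>i\<in>K. ?E $ i $ \<pi> i) * (\<Prod>i\<in>-K. ?E $ i $ \<pi> i)"
      by (rule prod.union_disjoint) auto
    also have "(\<Prod>i\<in>-K. ?E $ i $ \<pi> i) = 1"
      using that by (intro prod.neutral) (auto simp: extend_by_identity_def mat_def permutes_not_in)
    also have "(\<Prod>i\<in>K. ?E $ i $ \<pi> i) = (\<Prod>i\<in>K. U $ i $ \<pi> i)"
      using that by (intro prod.cong) (auto simp: extend_by_identity_def permutes_in_image)
    finally show ?thesis by simp
  qed
  have "(\<Sum>\<pi> | \<pi> permutes UNIV. of_int (sign \<pi>) * (\<Prod>i\<in>UNIV. ?E $ i $ \<pi> i)) =
      (\<Sum>\<pi> | \<pi> permutes K. of_int (sign \<pi>) * (\<Prod>i\<in>UNIV. ?E $ i $ \<pi> i))"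
    using vanish by (intro sum.mono_neutral_right) (auto intro: finite_permutations permutes_subset)
  then show ?thesis
    unfolding det_def by (simp add: restrict)
qed

lemma det_eq_0_iff_kernel: "det (A :: real^'n^'n) = 0 \<longleftrightarrow> (\<exists>v. v \<noteq> 0 \<and> A *v v = 0)"
  using det_eq_0_rank less_rank_noninjective vec.inj_iff_eq_0 by blast

lemma det_lead_eq_0_iff:
  "det_lead k U = 0 \<longleftrightarrow> (\<exists>z\<in>matrix_graph U \<inter> coord_lagrangian (lead k). z \<noteq> 0)"
  unfolding det_lead_def det_extend_by_identity[symmetric] det_eq_0_iff_kernel
    extend_by_identity_kernel
  by (auto simp: matrix_graph_def zero_prod_def) (metis matrix_vector_mult_0_right)

lemma continuous_on_vec_merge [continuous_intros]:
  assumes "continuous_on S f" "continuous_on S g"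
  shows "continuous_on S (\<lambda>x. vec_merge I (f x) (g x))"
  unfolding vec_merge_def
proof (intro continuous_on_vec_lambda)
  show "continuous_on S (\<lambda>x. if i \<in> I then f x $ i else g x $ i)" for i
    using assms by (cases "i \<in> I") (simp_all add: continuous_on_component)
qed

lemma open_transversal:
  "open {a :: 'n::finite jet2. det (vec_merge I (snd a) (mat 1)) \<noteq> 0}"
proof -
  have "continuous_on UNIV (\<lambda>a :: 'n jet2. det (vec_merge I (snd a) (mat 1)))"
    unfolding det_def by (intro continuous_intros)
  then show ?thesis by (intro open_Collect_neq continuous_on_const)
qed

lemma singular_transversal_exists:
  fixes I K :: "'n::finite set"
  assumes "i0 \<in> K" "i0 \<notin> I"
  shows "\<exists>U. transpose U = U \<and> det (vec_merge I U (mat 1)) \<noteq> 0 \<and>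
    (\<exists>z\<in>matrix_graph U \<inter> coord_lagrangian K. z \<noteq> 0)"
proof -
  define U :: "real^'n^'n" where "U = (\<chi> i j. if i = j \<and> i \<noteq> i0 then 1 else 0)"
  have "transpose U = U"
    by (auto simp: U_def transpose_def vec_eq_iff)
  moreover have "vec_merge I U (mat 1) = mat 1"
    using assms(2) by (auto simp: U_def mat_def vec_eq_iff)
  moreover have "U *v axis i0 1 = 0"
    by (simp add: matrix_vector_mult_basis column_def U_def vec_eq_iff)
  then have "(axis i0 1, 0) \<in> matrix_graph U \<inter> coord_lagrangian K"
    using assms(1) by (auto simp: matrix_graph_def coord_lagrangian_def axis_def image_iff)
  moreover have "(axis i0 (1 :: real), 0 :: real^'n) \<noteq> 0"
    by (simp add: zero_prod_def axis_eq_0_iff)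
  ultimately show ?thesis by force
qed

lemma Least_in_lead:
  assumes "1 \<le> m"
  shows "(LEAST i :: 'n::{finite,wellorder}. True) \<in> lead m"
proof -
  have "{j :: 'n. j < (LEAST i. True)} = {}"
    by (auto dest: not_less_Least)
  then show ?thesis using assms by (simp add: lead_def)
qed

lemma transversal_det_lead_eq_0_exists:
  assumes "1 \<le> k" "1 \<le> l"
  shows "\<exists>U. transpose U = U \<and>
    det (vec_merge (sym_diff (lead k) (lead l :: 'n::{finite,wellorder} set)) U (mat 1)) \<noteq> 0 \<and>
    det_lead k U = 0"
proof -
  let ?i0 = "LEAST i :: 'n. True"
  have "?i0 \<in> lead k" "?i0 \<notin> sym_diff (lead k) (lead l)"
    using Least_in_lead assms by auto
  from singular_transversal_exists[OF this] show ?thesis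
    by (simp add: det_lead_eq_0_iff)
qed

lemma prolongs_legendre_det_lead:
  assumes "prolongs (legendre (sym_diff (lead k) (lead l))) a b"
  shows "det_lead k (snd a) = 0 \<longleftrightarrow> det_lead l (snd b) = 0"
proof -
  obtain x u p U x' u' p' U' where ab: "a = ((x, u, p), U)" "b = ((x', u', p'), U')"
    by (metis prod.exhaust)
  with assms have "legendre_swap (sym_diff (lead k) (lead l)) ` matrix_graph U = matrix_graph U'"
    by (simp add: prolongs_legendre_iff)
  moreover have "sym_diff (lead k) (sym_diff (lead k) (lead l)) = lead l"
    by auto
  ultimately show ?thesis
    unfolding ab snd_conv det_lead_eq_0_iff
    by (metis legendre_swap_nontrivial_intersection)
qed

theorem corollary9p3:
  fixes k l :: nat
  assumes "1 \<le> k" "k \<le> CARD('n::{finite,wellorder})"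
      and "1 \<le> l" "l \<le> CARD('n)"
  shows "\<exists>(\<phi> :: 'n jet1 \<Rightarrow> 'n jet1) W D.
           local_contact_transformation \<phi> W \<and>
           openin (top_of_set J2) D \<and> D \<subseteq> J2 \<and> D \<subseteq> W \<times> UNIV \<and>
           (\<forall>a\<in>D. \<exists>b. prolongs \<phi> a b) \<and>
           (\<exists>a\<in>D. det_lead k (snd a) = 0) \<and>
           (\<forall>a\<in>D. \<forall>b. prolongs \<phi> a b \<longrightarrow>
               (det_lead k (snd a) = 0 \<longleftrightarrow> det_lead l (snd b) = 0))"
proof -
  define I :: "'n set" where "I = sym_diff (lead k) (lead l)"
  define D :: "'n jet2 set" where "D = J2 \<inter> {a. det (vec_merge I (snd a) (mat 1)) \<noteq> 0}"
  obtain U where "transpose U = U" "det (vec_merge I U (mat 1)) \<noteq> 0" "det_lead k U = 0"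
    using transversal_det_lead_eq_0_exists assms(1,3) unfolding I_def by blast
  then have "\<exists>a\<in>D. det_lead k (snd a) = 0"
    by (auto simp: D_def J2_def intro!: bexI[of _ "((0, 0, 0), U)"])
  moreover have "openin (top_of_set J2) D"
    unfolding D_def using open_transversal by blast
  moreover have "\<forall>a\<in>D. \<exists>b. prolongs (legendre I) a b"
    using prolongs_legendre_exists by (force simp: D_def J2_def)
  moreover have "\<forall>a b. prolongs (legendre I) a b \<longrightarrow>
      (det_lead k (snd a) = 0 \<longleftrightarrow> det_lead l (snd b) = 0)"
    unfolding I_def using prolongs_legendre_det_lead by blast
  moreover have "D \<subseteq> J2" "D \<subseteq> UNIV \<times> UNIV"
    by (auto simp: D_def)
  ultimately show ?thesis
    using local_contact_transformation_legendre by blast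
qed

end
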